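(* For any integer $\ell$, let $\mathcal D=\times_{i=1}^\ell\mathcal D_i$ and $\hat{\mathcal D}=\times_{i=1}^\ell\hat{\mathcal D}_i$ where each $\mathcal D_i,\hat{\mathcal D}_i$ is a distribution on $\mathbb R$. If $\|\mathcal D_i-\hat{\mathcal D}_i\|_K\le\xi$ for all $i$, then $\left|\Pr_{\mathcal D}[\mathcal E]-\Pr_{\hat{\mathcal D}}[\mathcal E]\right|\le2\xi\ell$ for every single-intersecting event $\mathcal E\subseteq\mathbb R^\ell$.
   Context: The Kolmogorov distance is $\|P-Q\|_K=\sup_{x\in\mathbb R}|\Pr_{X\sim P}[X\le x]-\Pr_{X\sim Q}[X\le x]|$. An event $\mathcal E\subseteq\mathbb R^\ell$ is single-intersecting if for every $i\in[\ell]$ and every $a_{-i}\in\mathbb R^{\ell-1}$, the intersection of $\mathcal E$ with the line $\{x:x_{-i}=a_{-i}\}$ is of the form $\{x:x_{-i}=a_{-i},\ x_i\in[\underline a,\bar a]\}$ (an interval, possibly empty, endpoints allowed to be $\pm\infty$). *)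

theory Defs
  imports "HOL-Probability.Probability"
begin

definition kolmogorov_dist :: "real measure \<Rightarrow> real measure \<Rightarrow> real" where
  "kolmogorov_dist P Q = (SUP x. \<bar>measure P {..x} - measure Q {..x}\<bar>)"

text \<open>Single-intersecting events in R^I (points are extensional functions on the
  index set I).\<close>
definition single_intersecting :: "nat set \<Rightarrow> (nat \<Rightarrow> real) set \<Rightarrow> bool" where
  "single_intersecting I E \<longleftrightarrow>
     E \<subseteq> (\<Pi>\<^sub>E i\<in>I. UNIV) \<and>
     (\<forall>i\<in>I. \<forall>a\<in>(\<Pi>\<^sub>E i\<in>I. UNIV).
        \<exists>lo hi :: ereal. {t. a(i := t) \<in> E} = {t. lo \<le> ereal t \<and> ereal t \<le> hi})"

end

theory Submission
  imports Defs
begin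

(* Hybrid argument: replace the factors D i by Dh i one coordinate at a time.
   By Fubini, Pr[E] is the average, over the other coordinates, of the probability of
   a line section of E in direction i; such a section is an interval, whose probability
   is a difference of two one-sided distribution functions, each moving by at most xi
   under the swap. Fixing coordinate i instead leaves a single-intersecting event in the
   remaining coordinates, so induction on the number of coordinates applies. *)

lemma cdf_diff_le_kolmogorov_dist:
  assumes "prob_space P" "prob_space Q"
  shows "\<bar>measure P {..x} - measure Q {..x}\<bar> \<le> kolmogorov_dist P Q"
  unfolding kolmogorov_dist_def
proof (rule cSUP_upper[OF UNIV_I], rule bdd_aboveI2)
  fix y
  show "\<bar>measure P {..y} - measure Q {..y}\<bar> \<le> 1"
    using prob_space.prob_le_1[OF assms(1), of "{..y}"] prob_space.prob_le_1[OF assms(2), of "{..y}"]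
      measure_nonneg[of P "{..y}"] measure_nonneg[of Q "{..y}"]
    by linarith
qed

lemma kolmogorov_dist_nonneg:
  assumes "prob_space P" "prob_space Q"
  shows "0 \<le> kolmogorov_dist P Q"
  using cdf_diff_le_kolmogorov_dist[OF assms, of 0] by linarith

lemma left_cdf_diff_le_kolmogorov_dist:
  assumes "real_distribution P" "real_distribution Q"
  shows "\<bar>measure P {..<x} - measure Q {..<x}\<bar> \<le> kolmogorov_dist P Q"
proof (rule tendsto_upperbound)
  show "((\<lambda>t. \<bar>cdf P t - cdf Q t\<bar>) \<longlongrightarrow> \<bar>measure P {..<x} - measure Q {..<x}\<bar>) (at_left x)"
    using assms
    by (intro tendsto_intros finite_borel_measure.cdf_at_left real_distribution.finite_borel_measure_M)
  show "\<forall>\<^sub>F t in at_left x. \<bar>cdf P t - cdf Q t\<bar> \<le> kolmogorov_dist P Q"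
    using assms by (simp add: cdf_def real_distribution_def cdf_diff_le_kolmogorov_dist)
qed simp

lemma ereal_ray_diff_le_kolmogorov_dist:
  assumes P: "real_distribution P" and Q: "real_distribution Q"
  shows "\<bar>measure P {t. ereal t \<le> h} - measure Q {t. ereal t \<le> h}\<bar> \<le> kolmogorov_dist P Q"
    and "\<bar>measure P {t. ereal t < h} - measure Q {t. ereal t < h}\<bar> \<le> kolmogorov_dist P Q"
proof -
  have "0 \<le> kolmogorov_dist P Q"
    using P Q by (simp add: real_distribution_def kolmogorov_dist_nonneg)
  moreover have "measure P UNIV = 1" "measure Q UNIV = 1"
    using P Q by (metis prob_space.prob_space real_distribution.axioms(1) real_distribution.space_eq_univ)+
  ultimately show "\<bar>measure P {t. ereal t \<le> h} - measure Q {t. ereal t \<le> h}\<bar> \<le> kolmogorov_dist P Q"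
    and "\<bar>measure P {t. ereal t < h} - measure Q {t. ereal t < h}\<bar> \<le> kolmogorov_dist P Q"
    using P Q cdf_diff_le_kolmogorov_dist left_cdf_diff_le_kolmogorov_dist
    by (cases h; simp add: real_distribution_def atMost_def lessThan_def)+
qed

lemma interval_diff_le_kolmogorov_dist:
  assumes P: "real_distribution P" and Q: "real_distribution Q"
  shows "\<bar>measure P {t. lo \<le> ereal t \<and> ereal t \<le> hi}
            - measure Q {t. lo \<le> ereal t \<and> ereal t \<le> hi}\<bar> \<le> 2 * kolmogorov_dist P Q"
proof (cases "lo \<le> hi")
  case True
  let ?U = "{t. ereal t \<le> hi}" and ?L = "{t. ereal t < lo}"
  have split: "{t. lo \<le> ereal t \<and> ereal t \<le> hi} = ?U - ?L" and "?L \<subseteq> ?U"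
    using True by auto
  have rays: "?U \<in> sets borel" "?L \<in> sets borel"
    by (cases hi; simp) (cases lo; simp)
  have diff: "measure R (?U - ?L) = measure R ?U - measure R ?L" if "real_distribution R" for R
  proof -
    interpret real_distribution R by fact
    show ?thesis using rays \<open>?L \<subseteq> ?U\<close> by (simp add: finite_measure_Diff)
  qed
  show ?thesis
    unfolding split diff[OF P] diff[OF Q]
    using ereal_ray_diff_le_kolmogorov_dist[OF P Q, of hi] ereal_ray_diff_le_kolmogorov_dist[OF P Q, of lo]
    by linarith
next
  case False
  then have empty: "{t. lo \<le> ereal t \<and> ereal t \<le> hi} = {}"
    using order_trans by blast
  show ?thesis
    unfolding empty using P Q by (simp add: real_distribution_def kolmogorov_dist_nonneg)
qed

lemma (in product_sigma_finite) product_integral_insert_rev: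
  fixes f :: "_ \<Rightarrow> _::{banach, second_countable_topology}"
  assumes I: "finite I" "i \<notin> I" and f: "integrable (Pi\<^sub>M (insert i I) M) f"
  shows "integral\<^sup>L (Pi\<^sub>M (insert i I) M) f = (\<integral>y. (\<integral>x. f (x(i := y)) \<partial>Pi\<^sub>M I M) \<partial>M i)"
proof -
  interpret I: finite_product_sigma_finite M I by standard fact
  have "integral\<^sup>L (Pi\<^sub>M (insert i I) M) f = integral\<^sup>L (Pi\<^sub>M ({i} \<union> I) M) f" by simp
  also have "\<dots> = (\<integral>x. (\<integral>y. f (merge {i} I (x, y)) \<partial>Pi\<^sub>M I M) \<partial>Pi\<^sub>M {i} M)"
    using f I by (intro product_integral_fold) auto
  also have "\<dots> = (\<integral>x. (\<integral>y. f (y(i := x i)) \<partial>Pi\<^sub>M I M) \<partial>Pi\<^sub>M {i} M)"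
    using I by (intro Bochner_Integration.integral_cong[OF refl] arg_cong[where f=f])
      (auto simp: merge_def space_PiM extensional_def PiE_def fun_eq_iff)
  also have "\<dots> = (\<integral>y. (\<integral>x. f (x(i := y)) \<partial>Pi\<^sub>M I M) \<partial>M i)"
  proof (intro product_integral_singleton I.borel_measurable_lebesgue_integral)
    have "(\<lambda>p. (snd p)(i := fst p)) \<in> measurable (M i \<Otimes>\<^sub>M Pi\<^sub>M I M) (Pi\<^sub>M (insert i I) M)"
      by (rule measurable_fun_upd[where J=I]) auto
    from measurable_comp[OF this borel_measurable_integrable[OF f]]
    show "(\<lambda>(y, x). f (x(i := y))) \<in> borel_measurable (M i \<Otimes>\<^sub>M Pi\<^sub>M I M)"
      by (simp add: comp_def case_prod_beta)
  qed
  finally show ?thesis .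
qed

context
  fixes M :: "'i \<Rightarrow> 'a measure" and I :: "'i set" and i :: 'i and E :: "('i \<Rightarrow> 'a) set"
  assumes prob: "\<And>j. prob_space (M j)" and I: "finite I" "i \<notin> I"
    and E: "E \<in> sets (Pi\<^sub>M (insert i I) M)"
begin

interpretation product_sigma_finite M
  using prob by (auto simp: product_sigma_finite_def intro: prob_space_imp_sigma_finite)

lemma integrable_indicator_PiM_insert: "integrable (Pi\<^sub>M (insert i I) M) (indicator E :: _ \<Rightarrow> real)"
proof -
  interpret prob_space "Pi\<^sub>M (insert i I) M" using prob by (rule prob_space_PiM)
  show ?thesis
    using E by (intro integrable_real_indicator) (simp_all add: emeasure_finite less_top[symmetric])
qed

lemma measure_PiM_insert_eq_integral_lines:
  "measure (Pi\<^sub>M (insert i I) M) E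
     = (\<integral>x. measure (M i) ({y. x(i := y) \<in> E} \<inter> space (M i)) \<partial>Pi\<^sub>M I M)"
proof -
  have "indicator E (x(i := y)) = (indicator {y. x(i := y) \<in> E} y :: real)" for x y
    by (simp add: indicator_def)
  then show ?thesis
    using product_integral_insert[OF I integrable_indicator_PiM_insert]
    by (simp add: sets.Int_space_eq2[OF E])
qed

lemma
  shows integrable_measure_lines:
    "integrable (Pi\<^sub>M I M) (\<lambda>x. measure (M i) ({y. x(i := y) \<in> E} \<inter> space (M i)))"
  and integrable_measure_slices:
    "integrable (M i) (\<lambda>y. measure (Pi\<^sub>M I M) ({x. x(i := y) \<in> E} \<inter> space (Pi\<^sub>M I M)))"
proof -
  \<comment> \<open>Measurability: both section measures are partial integrals of the indicator of E.\<close>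
  note E[measurable]
  interpret sigma_finite_measure "M i" by (rule sigma_finite_measures)
  interpret PI: prob_space "Pi\<^sub>M I M" using prob by (rule prob_space_PiM)
  have "(\<lambda>x. \<integral>y. indicator E (x(i := y)) \<partial>M i :: real) \<in> borel_measurable (Pi\<^sub>M I M)"
    using I by measurable
  moreover have "(\<lambda>y. \<integral>x. indicator E (x(i := y)) \<partial>Pi\<^sub>M I M :: real) \<in> borel_measurable (M i)"
    using I by measurable
  ultimately show "integrable (Pi\<^sub>M I M) (\<lambda>x. measure (M i) ({y. x(i := y) \<in> E} \<inter> space (M i)))"
    and "integrable (M i) (\<lambda>y. measure (Pi\<^sub>M I M) ({x. x(i := y) \<in> E} \<inter> space (Pi\<^sub>M I M)))"
    by (auto intro!: finite_measure.integrable_const_bound[where B=1] prob_space.finite_measure prob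
        prob_space.prob_le_1 PI.prob_space_axioms simp flip: indicator_vimage simp: vimage_def)
qed

lemma measure_PiM_insert_eq_integral_slices:
  "measure (Pi\<^sub>M (insert i I) M) E
     = (\<integral>y. measure (Pi\<^sub>M I M) ({x. x(i := y) \<in> E} \<inter> space (Pi\<^sub>M I M)) \<partial>M i)"
proof -
  have "indicator E (x(i := y)) = (indicator {x. x(i := y) \<in> E} x :: real)" for x y
    by (simp add: indicator_def)
  then show ?thesis
    using product_integral_insert_rev[OF I integrable_indicator_PiM_insert]
    by (simp add: sets.Int_space_eq2[OF E])
qed

lemma sets_PiM_slice:
  assumes "y \<in> space (M i)"
  shows "{x. x(i := y) \<in> E} \<inter> space (Pi\<^sub>M I M) \<in> sets (Pi\<^sub>M I M)"
proof -
  have "(\<lambda>x. x(i := y)) \<in> measurable (Pi\<^sub>M I M) (Pi\<^sub>M (insert i I) M)"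
    using assms by (intro measurable_fun_upd[where J=I]) auto
  from measurable_sets[OF this E] show ?thesis
    by (simp add: vimage_def Int_commute)
qed

end

lemma (in prob_space) abs_integral_diff_le_const:
  fixes f g :: "'a \<Rightarrow> real"
  assumes f: "integrable M f" and g: "integrable M g"
    and bound: "\<And>x. x \<in> space M \<Longrightarrow> \<bar>f x - g x\<bar> \<le> c"
  shows "\<bar>(\<integral>x. f x \<partial>M) - (\<integral>x. g x \<partial>M)\<bar> \<le> c"
proof -
  have "\<bar>(\<integral>x. f x \<partial>M) - (\<integral>x. g x \<partial>M)\<bar> = \<bar>\<integral>x. f x - g x \<partial>M\<bar>"
    using f g by simp
  also have "\<dots> \<le> (\<integral>x. \<bar>f x - g x\<bar> \<partial>M)"
    using integral_norm_bound[of M "\<lambda>x. f x - g x"] by simp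
  also have "\<dots> \<le> c"
    using f g bound by (intro integral_le_const AE_I2) auto
  finally show ?thesis .
qed

lemma single_intersecting_line:
  assumes "single_intersecting (insert i I) E" and "x \<in> (\<Pi>\<^sub>E j\<in>I. UNIV)"
  obtains lo hi :: ereal where "{y. x(i := y) \<in> E} = {t. lo \<le> ereal t \<and> ereal t \<le> hi}"
proof -
  have "x(i := 0) \<in> (\<Pi>\<^sub>E j\<in>insert i I. UNIV)"
    using assms(2) by (auto simp: PiE_def extensional_def)
  with assms(1) that show ?thesis
    unfolding single_intersecting_def by fastforce
qed

lemma single_intersecting_slice:
  assumes E: "single_intersecting (insert i I) E" and "i \<notin> I"
  shows "single_intersecting I ({x. x(i := y) \<in> E} \<inter> (\<Pi>\<^sub>E j\<in>I. UNIV))"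
  unfolding single_intersecting_def
proof (intro conjI ballI)
  fix j and a :: "nat \<Rightarrow> real"
  assume j: "j \<in> I" and a: "a \<in> (\<Pi>\<^sub>E j\<in>I. UNIV)"
  have "a(i := y) \<in> (\<Pi>\<^sub>E j\<in>insert i I. UNIV)"
    using a by (auto simp: PiE_def extensional_def)
  then obtain lo hi :: ereal where "{t. (a(i := y))(j := t) \<in> E} = {t. lo \<le> ereal t \<and> ereal t \<le> hi}"
    using E j unfolding single_intersecting_def by blast
  moreover have "(a(j := t))(i := y) = (a(i := y))(j := t)" and "a(j := t) \<in> (\<Pi>\<^sub>E j\<in>I. UNIV)" for t
    using a j \<open>i \<notin> I\<close> by (auto simp: fun_upd_twist PiE_def extensional_def)
  ultimately show "\<exists>lo hi :: ereal. {t. a(j := t) \<in> {x. x(i := y) \<in> E} \<inter> (\<Pi>\<^sub>E j\<in>I. UNIV)}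
      = {t. lo \<le> ereal t \<and> ereal t \<le> hi}"
    by auto
qed auto

lemma space_PiM_real_distribution:
  assumes "\<And>j. real_distribution (M j)"
  shows "space (Pi\<^sub>M I M) = (\<Pi>\<^sub>E j\<in>I. UNIV)"
  using assms by (simp add: space_PiM real_distribution.space_eq_univ)

lemma sets_PiM_real_distribution:
  assumes "\<And>j. real_distribution (M j)" and "\<And>j. real_distribution (N j)"
  shows "sets (Pi\<^sub>M I M) = sets (Pi\<^sub>M I N)"
  using assms by (intro sets_PiM_cong) (simp_all add: real_distribution.events_eq_borel)

lemma measure_PiM_diff_le_lines:
  fixes M N :: "'i \<Rightarrow> 'a measure"
  assumes M: "\<And>j. prob_space (M j)" and N: "\<And>j. prob_space (N j)"
    and I: "finite I" "i \<notin> I" and same: "Pi\<^sub>M I N = Pi\<^sub>M I M"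
    and E_M: "E \<in> sets (Pi\<^sub>M (insert i I) M)" and E_N: "E \<in> sets (Pi\<^sub>M (insert i I) N)"
    and bound: "\<And>x. x \<in> space (Pi\<^sub>M I M) \<Longrightarrow>
      \<bar>measure (M i) ({y. x(i := y) \<in> E} \<inter> space (M i))
        - measure (N i) ({y. x(i := y) \<in> E} \<inter> space (N i))\<bar> \<le> c"
  shows "\<bar>measure (Pi\<^sub>M (insert i I) M) E - measure (Pi\<^sub>M (insert i I) N) E\<bar> \<le> c"
  using integrable_measure_lines[OF M I E_M] integrable_measure_lines[OF N I E_N]
  unfolding measure_PiM_insert_eq_integral_lines[OF M I E_M] measure_PiM_insert_eq_integral_lines[OF N I E_N] same
  by (intro prob_space.abs_integral_diff_le_const[OF prob_space_PiM[OF M]] bound)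

lemma measure_PiM_diff_le_slices:
  fixes M N :: "'i \<Rightarrow> 'a measure"
  assumes M: "\<And>j. prob_space (M j)" and N: "\<And>j. prob_space (N j)"
    and I: "finite I" "i \<notin> I" and same: "N i = M i"
    and E_M: "E \<in> sets (Pi\<^sub>M (insert i I) M)" and E_N: "E \<in> sets (Pi\<^sub>M (insert i I) N)"
    and bound: "\<And>y. y \<in> space (M i) \<Longrightarrow>
      \<bar>measure (Pi\<^sub>M I M) ({x. x(i := y) \<in> E} \<inter> space (Pi\<^sub>M I M))
        - measure (Pi\<^sub>M I N) ({x. x(i := y) \<in> E} \<inter> space (Pi\<^sub>M I N))\<bar> \<le> c"
  shows "\<bar>measure (Pi\<^sub>M (insert i I) M) E - measure (Pi\<^sub>M (insert i I) N) E\<bar> \<le> c"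
  using integrable_measure_slices[OF M I E_M] integrable_measure_slices[OF N I E_N]
  unfolding measure_PiM_insert_eq_integral_slices[OF M I E_M] measure_PiM_insert_eq_integral_slices[OF N I E_N] same
  by (intro prob_space.abs_integral_diff_le_const[OF M] bound)

lemma measure_PiM_fun_upd_diff_le_kolmogorov_dist:
  fixes M :: "nat \<Rightarrow> real measure"
  assumes M: "\<And>j. real_distribution (M j)" and Q: "real_distribution Q"
    and I: "finite I" "i \<notin> I"
    and E: "E \<in> sets (Pi\<^sub>M (insert i I) M)" and E_si: "single_intersecting (insert i I) E"
  shows "\<bar>measure (Pi\<^sub>M (insert i I) M) E - measure (Pi\<^sub>M (insert i I) (M(i := Q))) E\<bar>
           \<le> 2 * kolmogorov_dist (M i) Q"
proof (rule measure_PiM_diff_le_lines[OF _ _ I])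
  have MQ: "\<And>j. real_distribution ((M(i := Q)) j)"
    using M Q by simp
  show "\<And>j. prob_space (M j)" "\<And>j. prob_space ((M(i := Q)) j)"
    using M MQ real_distribution.axioms(1) by blast+
  show "Pi\<^sub>M I (M(i := Q)) = Pi\<^sub>M I M"
    using I(2) by (intro PiM_cong) auto
  have "sets (Pi\<^sub>M (insert i I) (M(i := Q))) = sets (Pi\<^sub>M (insert i I) M)"
    using MQ M by (rule sets_PiM_real_distribution)
  then show "E \<in> sets (Pi\<^sub>M (insert i I) M)" "E \<in> sets (Pi\<^sub>M (insert i I) (M(i := Q)))"
    using E by simp_all
  have space: "space (Pi\<^sub>M I M) = (\<Pi>\<^sub>E j\<in>I. UNIV)"
    using M by (rule space_PiM_real_distribution)
  fix x assume "x \<in> space (Pi\<^sub>M I M)"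
  then obtain lo hi where "{y. x(i := y) \<in> E} = {t. lo \<le> ereal t \<and> ereal t \<le> hi}"
    using single_intersecting_line[OF E_si] unfolding space by blast
  then show "\<bar>measure (M i) ({y. x(i := y) \<in> E} \<inter> space (M i))
      - measure ((M(i := Q)) i) ({y. x(i := y) \<in> E} \<inter> space ((M(i := Q)) i))\<bar>
      \<le> 2 * kolmogorov_dist (M i) Q"
    using interval_diff_le_kolmogorov_dist[OF M[of i] Q, of lo hi]
    by (simp add: real_distribution.space_eq_univ[OF M[of i]] real_distribution.space_eq_univ[OF Q])
qed

lemma measure_PiM_diff_le_kolmogorov_dist:
  fixes M N :: "nat \<Rightarrow> real measure"
  assumes M: "\<And>j. real_distribution (M j)" and N: "\<And>j. real_distribution (N j)"
    and "finite I" and kd: "\<And>j. j \<in> I \<Longrightarrow> kolmogorov_dist (M j) (N j) \<le> \<xi>"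
    and "E \<in> sets (Pi\<^sub>M I M)" and "single_intersecting I E"
  shows "\<bar>measure (Pi\<^sub>M I M) E - measure (Pi\<^sub>M I N) E\<bar> \<le> 2 * \<xi> * real (card I)"
  using \<open>finite I\<close> kd \<open>E \<in> sets (Pi\<^sub>M I M)\<close> \<open>single_intersecting I E\<close>
proof (induction I arbitrary: E rule: finite_induct)
  case empty
  then show ?case by (simp add: PiM_empty)
next
  case (insert i I E)
  define H where "H = M(i := N i)"
  have H: "\<And>j. real_distribution (H j)"
    using M N by (simp add: H_def)
  have prob: "\<And>j. prob_space (M j)" "\<And>j. prob_space (H j)" "\<And>j. prob_space (N j)"
    using M H N by (simp_all add: real_distribution_def)
  have E: "E \<in> sets (Pi\<^sub>M (insert i I) M)" "E \<in> sets (Pi\<^sub>M (insert i I) H)"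
    "E \<in> sets (Pi\<^sub>M (insert i I) N)"
    using insert.prems(2) sets_PiM_real_distribution[where M=M and N=H]
      sets_PiM_real_distribution[where M=M and N=N] M H N by blast+
  have space: "space (Pi\<^sub>M I M) = (\<Pi>\<^sub>E j\<in>I. UNIV)" "space (Pi\<^sub>M I N) = (\<Pi>\<^sub>E j\<in>I. UNIV)"
    "\<And>j. space (M j) = UNIV"
    using M N by (simp_all add: space_PiM_real_distribution real_distribution.space_eq_univ)
  have PiM_H: "Pi\<^sub>M I H = Pi\<^sub>M I M"
    using insert.hyps(2) by (intro PiM_cong) (auto simp: H_def)
  have "\<bar>measure (Pi\<^sub>M (insert i I) M) E - measure (Pi\<^sub>M (insert i I) H) E\<bar> \<le> 2 * \<xi>"
    using measure_PiM_fun_upd_diff_le_kolmogorov_dist[OF M N[of i] insert.hyps E(1) insert.prems(3)]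
      insert.prems(1)[of i] by (simp add: H_def)
  moreover have "\<bar>measure (Pi\<^sub>M (insert i I) H) E - measure (Pi\<^sub>M (insert i I) N) E\<bar>
      \<le> 2 * \<xi> * real (card I)"
  proof (rule measure_PiM_diff_le_slices[OF prob(2,3) insert.hyps _ E(2,3)])
    show "N i = H i" by (simp add: H_def)
    fix y
    have "{x. x(i := y) \<in> E} \<inter> space (Pi\<^sub>M I M) \<in> sets (Pi\<^sub>M I M)"
      using sets_PiM_slice[OF prob(1) insert.hyps E(1), of y] by (simp add: space)
    then show "\<bar>measure (Pi\<^sub>M I H) ({x. x(i := y) \<in> E} \<inter> space (Pi\<^sub>M I H))
        - measure (Pi\<^sub>M I N) ({x. x(i := y) \<in> E} \<inter> space (Pi\<^sub>M I N))\<bar> \<le> 2 * \<xi> * real (card I)"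
      using insert.IH single_intersecting_slice[OF insert.prems(3) insert.hyps(2)] insert.prems(1)
      by (simp add: PiM_H space)
  qed
  ultimately show ?case
    using insert.hyps by (simp add: algebra_simps)
qed

theorem mainTheorem18:
  fixes l :: nat and D Dh :: "nat \<Rightarrow> real measure" and \<xi> :: real
    and E :: "(nat \<Rightarrow> real) set"
  assumes "\<And>i. i < l \<Longrightarrow> prob_space (D i) \<and> sets (D i) = sets borel"
    and "\<And>i. i < l \<Longrightarrow> prob_space (Dh i) \<and> sets (Dh i) = sets borel"
    and "\<And>i. i < l \<Longrightarrow> kolmogorov_dist (D i) (Dh i) \<le> \<xi>"
    and "E \<in> sets (\<Pi>\<^sub>M i\<in>{..<l}. D i)"
    and "single_intersecting {..<l} E"
  shows "\<bar>measure (\<Pi>\<^sub>M i\<in>{..<l}. D i) E - measure (\<Pi>\<^sub>M i\<in>{..<l}. Dh i) E\<bar>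
           \<le> 2 * \<xi> * real l"
proof -
  \<comment> \<open>Only the factors below l are constrained; pad both families with a point mass.\<close>
  define M where "M j = (if j < l then D j else return borel 0)" for j
  define N where "N j = (if j < l then Dh j else return borel 0)" for j
  have "real_distribution (return borel (0 :: real))"
    by (simp add: real_distribution_def real_distribution_axioms_def prob_space_return)
  then have M: "\<And>j. real_distribution (M j)" and N: "\<And>j. real_distribution (N j)"
    using assms(1,2) by (auto simp: M_def N_def real_distribution_def real_distribution_axioms_def)
  have PiM_M: "(\<Pi>\<^sub>M i\<in>{..<l}. D i) = Pi\<^sub>M {..<l} M"
    and PiM_N: "(\<Pi>\<^sub>M i\<in>{..<l}. Dh i) = Pi\<^sub>M {..<l} N"
    by (auto intro!: PiM_cong simp: M_def N_def)
  have "\<bar>measure (Pi\<^sub>M {..<l} M) E - measure (Pi\<^sub>M {..<l} N) E\<bar> \<le> 2 * \<xi> * real (card {..<l})"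
  proof (rule measure_PiM_diff_le_kolmogorov_dist[OF M N])
    show "E \<in> sets (Pi\<^sub>M {..<l} M)"
      using assms(4) by (simp add: PiM_M)
  qed (use assms(3,5) in \<open>auto simp: M_def N_def\<close>)
  then show ?thesis
    by (simp add: PiM_M PiM_N)
qed

end
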